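(* For any $g>0$, $\kappa>0$, $\mathtt h\in(0,\infty]$, any lattice $\Gamma\subset\mathbb R^2$ and any $c_*\in\mathbb R^2$, any line through the origin contains at most two elements of the set $\mathcal V=\{j\in\Gamma'\setminus\{0\}:\omega(j)=c_*\cdot j\}$; i.e. $\mathcal V$ contains at most two pairwise collinear vectors.
   Context: $\Gamma'$ is the dual lattice of $\Gamma$ (a lattice in $\mathbb R^2$), and $\omega(\xi)=\sqrt{(g+\kappa|\xi|^2)|\xi|\tanh(\mathtt h|\xi|)}$ for $\xi\in\mathbb R^2$, with $\tanh(\mathtt h|\xi|)$ replaced by $1$ when $\mathtt h=\infty$. *)

theory Defs
  imports "HOL-Analysis.Analysis" "HOL-Library.Extended_Real"
begin

definition lattice2 :: "(real^2) set \<Rightarrow> bool" where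
  "lattice2 \<Gamma> \<longleftrightarrow> (\<exists>a b. independent ({a, b} :: (real^2) set) \<and> a \<noteq> b \<and>
      \<Gamma> = {of_int m *\<^sub>R a + of_int n *\<^sub>R b | m n. True})"

definition dual_lattice :: "(real^2) set \<Rightarrow> (real^2) set" where
  "dual_lattice \<Gamma> = {\<xi>. \<forall>\<gamma>\<in>\<Gamma>. \<xi> \<bullet> \<gamma> \<in> \<int>}"

definition omega :: "real \<Rightarrow> real \<Rightarrow> ereal \<Rightarrow> real^2 \<Rightarrow> real" where
  "omega g \<kappa> h \<xi> = sqrt ((g + \<kappa> * (norm \<xi>)^2) * norm \<xi> *
      (if h = \<infinity> then 1 else tanh (real_of_ereal h * norm \<xi>)))"

definition resonant_set :: "real \<Rightarrow> real \<Rightarrow> ereal \<Rightarrow> (real^2) set \<Rightarrow> real^2 \<Rightarrow> (real^2) set" where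
  "resonant_set g \<kappa> h \<Gamma> c = {j \<in> dual_lattice \<Gamma> - {0}. omega g \<kappa> h j = c \<bullet> j}"

end

theory Submission
  imports Defs
begin

text \<open>A resonant \<open>j = t v\<close> satisfies \<open>\<omega>(j) = t (c \<bullet> v) > 0\<close>, so all resonant points of the line lie
  on one open half-line, where they are determined by \<open>r = |j|\<close>. Squaring the resonance condition,
  \<open>r\<close> is a positive root of \<open>(g + \<kappa> r\<^sup>2) tanh(h r) = A r\<close> with \<open>A = (c \<bullet> v)\<^sup>2 / |v|\<^sup>2\<close>. For
  \<open>h = \<infinity>\<close> this equation is quadratic. For finite \<open>h\<close>, three roots of
  \<open>L(r) = A r coth(h r) - \<kappa> r\<^sup>2 - g\<close> would give, by Rolle, two zeros of
  \<open>L'(r) = r (A h m(h r) - 2 \<kappa>)\<close>, where \<open>m(x) = (x coth x)' / x\<close>. But \<open>m\<close> is strictly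
  decreasing on \<open>(0, \<infinity>)\<close>: the sign of \<open>m'\<close> reduces to \<open>sinh\<^sup>2 x + x tanh x > 2 x\<^sup>2\<close>, which
  follows from the Taylor bounds \<open>sinh x > x + x\<^sup>3/6\<close> and \<open>tanh x > x - x\<^sup>3/3\<close>.\<close>

lemma card_le_2_if_no_increasing_triple:
  fixes S :: "'a::linorder set"
  assumes no_triple: "\<And>a b c. a \<in> S \<Longrightarrow> b \<in> S \<Longrightarrow> c \<in> S \<Longrightarrow> a < b \<Longrightarrow> b < c \<Longrightarrow> False"
  shows "finite S \<and> card S \<le> 2"
proof (rule ccontr)
  assume "\<not> (finite S \<and> card S \<le> 2)"
  then obtain B where "finite B" "card B = 3" "B \<subseteq> S"
    by (metis infinite_arbitrarily_large not_less_eq_eq numeral_2_eq_2 numeral_3_eq_3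
        obtain_subset_with_card_n)
  then obtain x y z where "x \<in> S" "y \<in> S" "z \<in> S" "x \<noteq> y" "y \<noteq> z" "x \<noteq> z"
    by (auto simp: card_3_iff)
  then show False
    using no_triple by (metis linorder_neqE)
qed

lemma Rolle_twice:
  fixes f f' :: "real \<Rightarrow> real"
  assumes "a < b" "b < c" "f a = f b" "f b = f c"
    and "\<And>x. a \<le> x \<Longrightarrow> x \<le> c \<Longrightarrow> DERIV f x :> f' x"
  shows "\<exists>y z. a < y \<and> y < b \<and> b < z \<and> z < c \<and> f' y = 0 \<and> f' z = 0"
proof -
  obtain y where "a < y" "y < b" "f b - f a = (b - a) * f' y"
    using MVT2[of a b f f'] assms by auto
  moreover obtain z where "b < z" "z < c" "f c - f b = (c - b) * f' z"
    using MVT2[of b c f f'] assms by auto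
  ultimately show ?thesis
    using assms by auto
qed

lemma pos_if_deriv_pos:
  fixes f f' :: "real \<Rightarrow> real"
  assumes "f 0 = 0" and "\<And>x. x \<ge> 0 \<Longrightarrow> DERIV f x :> f' x"
    and "\<And>x. x > 0 \<Longrightarrow> f' x > 0" and "x > 0"
  shows "f x > 0"
proof -
  obtain z where "0 < z" "z < x" "f x - f 0 = (x - 0) * f' z"
    using MVT2[of 0 x f f'] assms by auto
  then show ?thesis
    using assms(1) assms(3)[of z] by simp
qed

lemma tanh_lt_self:
  fixes x :: real
  assumes "x > 0"
  shows "tanh x < x"
proof -
  have "0 < x - tanh x"
    by (rule pos_if_deriv_pos[where f = "\<lambda>x. x - tanh x" and f' = "\<lambda>x. tanh x ^ 2"])
      (use assms in \<open>auto intro!: derivative_eq_intros\<close>)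
  then show ?thesis by simp
qed

lemma self_sub_cube_lt_tanh:
  fixes x :: real
  assumes "x > 0"
  shows "x - x ^ 3 / 3 < tanh x"
proof -
  have "tanh y ^ 2 < y ^ 2" if "y > 0" for y :: real
    using tanh_lt_self[OF that] that by (simp add: power_strict_mono)
  then have "0 < tanh x - x + x ^ 3 / 3"
    by (intro pos_if_deriv_pos[where f = "\<lambda>x. tanh x - x + x ^ 3 / 3"
          and f' = "\<lambda>x. x ^ 2 - tanh x ^ 2"])
      (use assms in \<open>auto intro!: derivative_eq_intros simp: power2_eq_square\<close>)
  then show ?thesis by simp
qed

lemma self_lt_sinh:
  fixes x :: real
  assumes "x > 0"
  shows "x < sinh x"
proof -
  have "1 < cosh y" if "y > 0" for y :: real
    using cosh_real_ge_1[of y] cosh_real_one_iff[of y] that by linarith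
  then have "0 < sinh x - x"
    by (intro pos_if_deriv_pos[where f = "\<lambda>x. sinh x - x" and f' = "\<lambda>x. cosh x - 1"])
      (use assms in \<open>auto intro!: derivative_eq_intros\<close>)
  then show ?thesis by simp
qed

lemma one_add_sq_half_lt_cosh:
  fixes x :: real
  assumes "x > 0"
  shows "1 + x ^ 2 / 2 < cosh x"
proof -
  have "0 < cosh x - 1 - x ^ 2 / 2"
    by (rule pos_if_deriv_pos[where f = "\<lambda>x. cosh x - 1 - x ^ 2 / 2"
          and f' = "\<lambda>x. sinh x - x"])
      (use assms self_lt_sinh in \<open>auto intro!: derivative_eq_intros\<close>)
  then show ?thesis by simp
qed

lemma self_add_cube_lt_sinh:
  fixes x :: real
  assumes "x > 0"
  shows "x + x ^ 3 / 6 < sinh x"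
proof -
  have "0 < cosh y - 1 - y ^ 2 / 2" if "y > 0" for y :: real
    using one_add_sq_half_lt_cosh[OF that] by simp
  then have "0 < sinh x - x - x ^ 3 / 6"
    by (intro pos_if_deriv_pos[where f = "\<lambda>x. sinh x - x - x ^ 3 / 6"
          and f' = "\<lambda>x. cosh x - 1 - x ^ 2 / 2"])
      (use assms in \<open>auto intro!: derivative_eq_intros\<close>)
  then show ?thesis by simp
qed

lemma two_sq_lt_sinh_sq_add_x_tanh:
  fixes x :: real
  assumes "x > 0"
  shows "2 * x\<^sup>2 < sinh x ^ 2 + x * tanh x"
proof -
  have "x ^ 2 + x ^ 4 / 3 < (x + x ^ 3 / 6) ^ 2"
    using assms by (simp add: power2_eq_square power3_eq_cube power4_eq_xxxx algebra_simps)
  also have "\<dots> < sinh x ^ 2"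
    using self_add_cube_lt_sinh[OF assms] assms by (simp add: power_strict_mono)
  finally have "x ^ 2 + x ^ 4 / 3 < sinh x ^ 2" .
  moreover have "x * (x - x ^ 3 / 3) < x * tanh x"
    using self_sub_cube_lt_tanh[OF assms] assms by simp
  ultimately show ?thesis
    by (simp add: power2_eq_square power3_eq_cube power4_eq_xxxx algebra_simps)
qed

text \<open>\<open>m(x) = (x coth x)' / x\<close>\<close>
definition xcoth_deriv_ratio :: "real \<Rightarrow> real" where
  "xcoth_deriv_ratio x = (cosh x * sinh x - x) / (x * sinh x ^ 2)"

lemma DERIV_xcoth_deriv_ratio:
  fixes x :: real
  assumes "x > 0"
  defines "D \<equiv> cosh x * sinh x ^ 2 + x * sinh x - 2 * x\<^sup>2 * cosh x"
  shows "DERIV xcoth_deriv_ratio x :> - D / (x\<^sup>2 * sinh x ^ 3)"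
proof -
  have "sinh x > 0"
    using assms by simp
  have pyth: "cosh x * cosh x = sinh x * sinh x + 1"
    using cosh_square_eq[of x] by (simp add: power2_eq_square)
  have num: "DERIV (\<lambda>x. cosh x * sinh x - x) x :> 2 * sinh x ^ 2"
    using pyth by (auto intro!: derivative_eq_intros simp: power2_eq_square)
  have den: "DERIV (\<lambda>x. x * sinh x ^ 2) x :> sinh x ^ 2 + 2 * x * sinh x * cosh x"
    by (auto intro!: derivative_eq_intros simp: power2_eq_square algebra_simps)
  have "2 * sinh x ^ 2 * (x * sinh x ^ 2) - (sinh x ^ 2 + 2 * x * sinh x * cosh x) * (cosh x * sinh x - x)
      + sinh x * D = 2 * x * sinh x ^ 2 * (sinh x ^ 2 + 1 - cosh x ^ 2)"
    unfolding D_def by (simp add: algebra_simps power2_eq_square)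
  then have "2 * sinh x ^ 2 * (x * sinh x ^ 2) - (sinh x ^ 2 + 2 * x * sinh x * cosh x) * (cosh x * sinh x - x)
      = - sinh x * D"
    by (simp add: cosh_square_eq)
  then have "DERIV xcoth_deriv_ratio x :> - sinh x * D / (x * sinh x ^ 2) ^ Suc (Suc 0)"
    unfolding xcoth_deriv_ratio_def[abs_def]
    using DERIV_quotient[OF num den] assms by simp
  moreover have "- sinh x * D / (x * sinh x ^ 2) ^ Suc (Suc 0) = - D / (x\<^sup>2 * sinh x ^ 3)"
    using \<open>sinh x > 0\<close> by (simp add: field_simps power2_eq_square power3_eq_cube)
  ultimately show ?thesis
    by simp
qed

lemma xcoth_deriv_ratio_strict_decreasing:
  assumes "0 < a" "a < b"
  shows "xcoth_deriv_ratio b < xcoth_deriv_ratio a"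
proof (rule DERIV_neg_imp_decreasing[OF \<open>a < b\<close>])
  fix x :: real
  assume "a \<le> x" "x \<le> b"
  then have "x > 0" "sinh x > 0"
    using assms by auto
  define D where "D = cosh x * sinh x ^ 2 + x * sinh x - 2 * x\<^sup>2 * cosh x"
  have "D = cosh x * (sinh x ^ 2 + x * tanh x - 2 * x\<^sup>2)"
    unfolding D_def tanh_def by (simp add: field_simps)
  then have "D > 0"
    using two_sq_lt_sinh_sq_add_x_tanh[OF \<open>x > 0\<close>] by simp
  then have "- D / (x\<^sup>2 * sinh x ^ 3) < 0"
    using \<open>x > 0\<close> \<open>sinh x > 0\<close> by (simp add: divide_neg_pos)
  moreover have "DERIV xcoth_deriv_ratio x :> - D / (x\<^sup>2 * sinh x ^ 3)"
    unfolding D_def by (rule DERIV_xcoth_deriv_ratio[OF \<open>x > 0\<close>])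
  ultimately show "\<exists>y. DERIV xcoth_deriv_ratio x :> y \<and> y < 0"
    by blast
qed

lemma DERIV_mult_coth:
  fixes x :: real
  assumes "sinh x \<noteq> 0"
  shows "DERIV (\<lambda>x. x * cosh x / sinh x) x :> (cosh x * sinh x - x) / sinh x ^ 2"
proof -
  have "x * (cosh x ^ 2 - sinh x ^ 2) = x"
    by (simp add: hyperbolic_pythagoras)
  then have "x * sinh x * sinh x - x * cosh x * cosh x = - x"
    by (simp add: algebra_simps power2_eq_square)
  then show ?thesis
    by (auto intro!: derivative_eq_intros assms simp: power2_eq_square algebra_simps)
qed

lemma quadratic_no_three_roots:
  fixes g \<kappa> A a b c :: real
  assumes "\<kappa> \<noteq> 0" "a < b" "b < c"
    and roots: "\<And>r. r \<in> {a, b, c} \<Longrightarrow> g + \<kappa> * r\<^sup>2 = A * r"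
  shows False
proof -
  have sum_of_roots: "\<kappa> * (r + s) = A" if "r < s" "r \<in> {a, b, c}" "s \<in> {a, b, c}" for r s
  proof -
    have "(s - r) * (\<kappa> * (r + s) - A) = 0"
      using roots[OF that(2)] roots[OF that(3)] by (simp add: algebra_simps power2_eq_square)
    then show ?thesis
      using \<open>r < s\<close> by simp
  qed
  have "\<kappa> * (a + b) = \<kappa> * (a + c)"
    using sum_of_roots[of a b] sum_of_roots[of a c] assms by simp
  then show False
    using assms by simp
qed

lemma tanh_dispersion_no_three_roots:
  fixes g \<kappa> H A a b c :: real
  assumes "\<kappa> > 0" "H > 0" "0 < a" "a < b" "b < c"
    and roots: "\<And>r. r \<in> {a, b, c} \<Longrightarrow> (g + \<kappa> * r\<^sup>2) * tanh (H * r) = A * r"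
  shows False
proof -
  define L where "L r = A / H * (H * r * cosh (H * r) / sinh (H * r)) - (\<kappa> * r\<^sup>2 + g)" for r
  define L' where "L' r = r * (A * H * xcoth_deriv_ratio (H * r) - 2 * \<kappa>)" for r
  have deriv: "DERIV L r :> L' r" if "r > 0" for r
  proof -
    have "sinh (H * r) > 0"
      using that \<open>H > 0\<close> by simp
    have "DERIV (\<lambda>r. H * r * cosh (H * r) / sinh (H * r)) r :>
        (cosh (H * r) * sinh (H * r) - H * r) / sinh (H * r) ^ 2 * H"
      by (rule DERIV_chain2[OF DERIV_mult_coth])
        (use \<open>sinh (H * r) > 0\<close> in \<open>auto intro!: derivative_eq_intros\<close>)
    moreover have "DERIV (\<lambda>r. \<kappa> * r\<^sup>2 + g) r :> 2 * \<kappa> * r"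
      by (auto intro!: derivative_eq_intros)
    ultimately have "DERIV L r :>
        A / H * ((cosh (H * r) * sinh (H * r) - H * r) / sinh (H * r) ^ 2 * H) - 2 * \<kappa> * r"
      unfolding L_def[abs_def] by (intro DERIV_diff DERIV_cmult)
    moreover have "A / H * ((cosh (H * r) * sinh (H * r) - H * r) / sinh (H * r) ^ 2 * H)
        - 2 * \<kappa> * r = L' r"
      unfolding L'_def xcoth_deriv_ratio_def
      using that \<open>H > 0\<close> \<open>sinh (H * r) > 0\<close> by (simp add: field_simps)
    ultimately show ?thesis
      by simp
  qed
  have zero: "L r = 0" if "r \<in> {a, b, c}" for r
  proof -
    have "r > 0"
      using that assms by auto
    have "(g + \<kappa> * r\<^sup>2) * sinh (H * r) = A * r * cosh (H * r)"
      using roots[OF that] unfolding tanh_def by (simp add: field_simps)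
    then show ?thesis
      unfolding L_def using \<open>r > 0\<close> \<open>H > 0\<close> by (simp add: field_simps)
  qed
  have "DERIV L r :> L' r" if "a \<le> r" "r \<le> c" for r
    using deriv \<open>0 < a\<close> that by simp
  then obtain y z where "a < y" "y < b" "b < z" "L' y = 0" "L' z = 0"
    using Rolle_twice[OF \<open>a < b\<close> \<open>b < c\<close>] zero by (metis insertCI)
  then have "0 < y" "y < z"
    using \<open>0 < a\<close> by simp_all
  have "A * H * xcoth_deriv_ratio (H * y) = 2 * \<kappa>" "A * H * xcoth_deriv_ratio (H * z) = 2 * \<kappa>"
    using \<open>L' y = 0\<close> \<open>L' z = 0\<close> \<open>0 < y\<close> \<open>y < z\<close> unfolding L'_def by auto
  moreover from this(1) have "A * H \<noteq> 0"
    using \<open>\<kappa> > 0\<close> by auto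
  ultimately have "xcoth_deriv_ratio (H * y) = xcoth_deriv_ratio (H * z)"
    by (metis mult_left_cancel)
  moreover have "xcoth_deriv_ratio (H * z) < xcoth_deriv_ratio (H * y)"
    using xcoth_deriv_ratio_strict_decreasing \<open>0 < y\<close> \<open>y < z\<close> \<open>H > 0\<close> by simp
  ultimately show False
    by simp
qed

definition tanh_depth :: "ereal \<Rightarrow> real \<Rightarrow> real" where
  "tanh_depth h r = (if h = \<infinity> then 1 else tanh (real_of_ereal h * r))"

lemma dispersion_roots_card_le_2:
  fixes g \<kappa> A :: real and h :: ereal
  assumes "\<kappa> > 0" "h > 0"
  shows "finite {r. r > 0 \<and> (g + \<kappa> * r\<^sup>2) * tanh_depth h r = A * r} \<and>
    card {r. r > 0 \<and> (g + \<kappa> * r\<^sup>2) * tanh_depth h r = A * r} \<le> 2"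
proof (rule card_le_2_if_no_increasing_triple)
  fix a b c :: real
  assume roots: "a \<in> {r. r > 0 \<and> (g + \<kappa> * r\<^sup>2) * tanh_depth h r = A * r}"
    "b \<in> {r. r > 0 \<and> (g + \<kappa> * r\<^sup>2) * tanh_depth h r = A * r}"
    "c \<in> {r. r > 0 \<and> (g + \<kappa> * r\<^sup>2) * tanh_depth h r = A * r}"
    and "a < b" "b < c"
  show False
  proof (cases "h = \<infinity>")
    case True
    then show False
      using quadratic_no_three_roots[of \<kappa> a b c g A] roots \<open>a < b\<close> \<open>b < c\<close> \<open>\<kappa> > 0\<close>
      by (auto simp: tanh_depth_def)
  next
    case False
    then have "real_of_ereal h > 0"
      using \<open>h > 0\<close> by (cases h) auto
    then show False
      using tanh_dispersion_no_three_roots[of \<kappa> "real_of_ereal h" a b c g A]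
        roots \<open>a < b\<close> \<open>b < c\<close> \<open>\<kappa> > 0\<close> False
      by (auto simp: tanh_depth_def)
  qed
qed

lemma tanh_depth_pos:
  assumes "h > 0" "r > 0"
  shows "tanh_depth h r > 0"
  using assms by (cases h) (auto simp: tanh_depth_def)

lemma omega_eq_tanh_depth:
  "omega g \<kappa> h \<xi> = sqrt ((g + \<kappa> * (norm \<xi>)\<^sup>2) * norm \<xi> * tanh_depth h (norm \<xi>))"
  unfolding omega_def tanh_depth_def ..

lemma omega_pos:
  assumes "g > 0" "\<kappa> > 0" "h > 0" "\<xi> \<noteq> 0"
  shows "omega g \<kappa> h \<xi> > 0"
  unfolding omega_eq_tanh_depth
  using assms tanh_depth_pos[of h "norm \<xi>"] by (simp add: add_pos_nonneg)

lemma resonant_on_line: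
  fixes j v c :: "real^2"
  assumes "g > 0" "\<kappa> > 0" "h > 0"
    and "j \<in> resonant_set g \<kappa> h \<Gamma> c" "j = t *\<^sub>R v"
  shows "0 < t * (c \<bullet> v)"
    and "(g + \<kappa> * (norm j)\<^sup>2) * tanh_depth h (norm j) = (c \<bullet> v)\<^sup>2 / (norm v)\<^sup>2 * norm j"
proof -
  have "j \<noteq> 0" and resonant: "omega g \<kappa> h j = t * (c \<bullet> v)"
    using assms(4,5) by (auto simp: resonant_set_def)
  then have "v \<noteq> 0"
    using assms(5) by auto
  have "omega g \<kappa> h j > 0"
    using omega_pos assms(1-3) \<open>j \<noteq> 0\<close> by blast
  then show "0 < t * (c \<bullet> v)"
    using resonant by simp
  define r where "r = norm j"
  have "r > 0"
    using \<open>j \<noteq> 0\<close> r_def by simp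
  have "(g + \<kappa> * r\<^sup>2) * r * tanh_depth h r = (omega g \<kappa> h j)\<^sup>2"
    unfolding omega_eq_tanh_depth r_def
    using assms(1-3) \<open>j \<noteq> 0\<close> tanh_depth_pos[of h "norm j"] by (simp add: add_pos_nonneg)
  also have "\<dots> = (c \<bullet> v)\<^sup>2 / (norm v)\<^sup>2 * r * r"
    using resonant assms(5) \<open>v \<noteq> 0\<close> unfolding r_def
    by (simp add: power_mult_distrib power2_eq_square field_simps)
  finally have "((g + \<kappa> * r\<^sup>2) * tanh_depth h r) * r = ((c \<bullet> v)\<^sup>2 / (norm v)\<^sup>2 * r) * r"
    by (simp add: mult_ac)
  then show "(g + \<kappa> * (norm j)\<^sup>2) * tanh_depth h (norm j) = (c \<bullet> v)\<^sup>2 / (norm v)\<^sup>2 * norm j"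
    unfolding r_def[symmetric] using \<open>r > 0\<close> by (metis mult_right_cancel less_irrefl)
qed

lemma inj_on_norm_open_ray:
  fixes v :: "'a::real_normed_vector"
  shows "inj_on norm {t *\<^sub>R v | t. 0 < t * d}"
proof (rule inj_onI)
  fix x y
  assume "x \<in> {t *\<^sub>R v | t. 0 < t * d}" "y \<in> {t *\<^sub>R v | t. 0 < t * d}" and "norm x = norm y"
  then obtain s t where x: "x = s *\<^sub>R v" "0 < s * d" and y: "y = t *\<^sub>R v" "0 < t * d"
    by blast
  show "x = y"
  proof (cases "v = 0")
    case False
    then have "\<bar>s\<bar> = \<bar>t\<bar>"
      using \<open>norm x = norm y\<close> x y by simp
    moreover have "s \<noteq> - t"
      using x y by auto
    ultimately show "x = y"
      using x y by (auto simp: abs_eq_iff)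
  qed (use x y in simp)
qed

theorem mainTheorem4:
  fixes g \<kappa> :: real and h :: ereal and \<Gamma> :: "(real^2) set" and c v :: "real^2"
  assumes "g > 0" and "\<kappa> > 0" and "h > 0"
    and "lattice2 \<Gamma>"
    and "v \<noteq> 0"
  shows "finite (resonant_set g \<kappa> h \<Gamma> c \<inter> {t *\<^sub>R v | t. True}) \<and>
         card (resonant_set g \<kappa> h \<Gamma> c \<inter> {t *\<^sub>R v | t. True}) \<le> 2"
proof -
  define S where "S = resonant_set g \<kappa> h \<Gamma> c \<inter> {t *\<^sub>R v | t. True}"
  define R where "R = {r. r > 0 \<and> (g + \<kappa> * r\<^sup>2) * tanh_depth h r = (c \<bullet> v)\<^sup>2 / (norm v)\<^sup>2 * r}"
  have "S \<subseteq> {t *\<^sub>R v | t. 0 < t * (c \<bullet> v)}"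
    unfolding S_def using resonant_on_line(1) assms(1-3) by blast
  then have inj: "inj_on norm S"
    using inj_on_norm_open_ray inj_on_subset by blast
  have "norm ` S \<subseteq> R"
    unfolding S_def R_def using resonant_on_line(2) assms(1-3)
    by (fastforce simp: resonant_set_def)
  moreover have "finite R \<and> card R \<le> 2"
    unfolding R_def using dispersion_roots_card_le_2 assms(2,3) by blast
  ultimately have "finite (norm ` S)" "card (norm ` S) \<le> 2"
    by (meson finite_subset card_mono order_trans)+
  then have "finite S \<and> card S \<le> 2"
    using finite_imageD[OF _ inj] card_image[OF inj] by simp
  then show ?thesis
    unfolding S_def .
qed

end
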